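(* Let $K$ be a compact line and let $G:K\to\mathbb{R}$ be a nondecreasing function. If $a=0_K$ or $a=1_K$, then either there exists a neighborhood $V$ of $a$ such that $V\setminus\{a\}\neq\emptyset$ and $G$ is constant on $V\setminus\{a\}$, or $a$ has a countable local basis.
   Context: A compact line is a compact space $K$ whose topology is the order topology of a linear order on $K$; $0_K$ and $1_K$ denote its minimum and maximum, and $0_K<1_K$. *)

theory Defs
  imports Complex_Main "HOL-Library.Countable_Set"
begin

text \<open>A compact line: a type of class linorder_topology (topology = order topology)
  whose universe is compact and has at least two points.\<close>

definition countable_local_basis :: "'a::topological_space \<Rightarrow> bool" where
  "countable_local_basis a \<longleftrightarrow>
     (\<exists>\<B>::'a set set. countable \<B> \<and> (\<forall>B\<in>\<B>. open B \<and> a \<in> B) \<and>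
        (\<forall>U. open U \<and> a \<in> U \<longrightarrow> (\<exists>B\<in>\<B>. B \<subseteq> U)))"

definition is_nhd :: "'a::topological_space set \<Rightarrow> 'a \<Rightarrow> bool" where
  "is_nhd V a \<longleftrightarrow> (\<exists>U. open U \<and> a \<in> U \<and> U \<subseteq> V)"

end

theory Submission
  imports Defs
begin

text \<open>Say \<open>a\<close> is the minimum; the maximum is symmetric.
  Either \<open>G\<close> is constant on some interval \<open>(a, b)\<close>, and then \<open>[a, b)\<close> is the required
  neighbourhood (unless \<open>a\<close> is isolated), or \<open>G x > L\<close> for all \<open>x > a\<close>, where
  \<open>L = inf {G x | x > a}\<close>. In the latter case the sublevel sets \<open>{G < t}\<close>, \<open>t > L\<close>, are
  down-sets containing points above \<open>a\<close>, hence neighbourhoods of \<open>a\<close>, and every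
  neighbourhood \<open>[a, b)\<close> contains \<open>{G < G x} \<subseteq> [a, x)\<close> for some \<open>x \<in> (a, b)\<close>;
  so the sublevel sets for \<open>t = L + 1/(n+1)\<close> yield a countable local basis.\<close>

lemma countable_local_basis_if_open_singleton:
  assumes "open {a}"
  shows "countable_local_basis a"
  unfolding countable_local_basis_def
  using assms by (intro exI[of _ "{{a}}"]) auto

lemma punctured_constant_or_countable_local_basis:
  fixes G :: "'a::topological_space \<Rightarrow> 'b"
  assumes "open V" "a \<in> V" "\<forall>x\<in>V - {a}. G x = c"
  shows "(\<exists>V. is_nhd V a \<and> V - {a} \<noteq> {} \<and> (\<exists>c. \<forall>x\<in>V - {a}. G x = c))
         \<or> countable_local_basis a"
proof (cases "V - {a} = {}")
  case True
  with assms(2) have "V = {a}" by blast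
  with assms(1) show ?thesis by (simp add: countable_local_basis_if_open_singleton)
next
  case False
  with assms have "is_nhd V a" unfolding is_nhd_def by blast
  with False assms(3) show ?thesis by blast
qed

lemma countable_local_basis_if_sublevel_sets:
  fixes G :: "'a::topological_space \<Rightarrow> real"
  assumes nhd: "\<And>t. L < t \<Longrightarrow> is_nhd {x. G x < t} a"
    and fine: "\<And>U. open U \<Longrightarrow> a \<in> U \<Longrightarrow> \<exists>t>L. {x. G x < t} \<subseteq> U"
  shows "countable_local_basis a"
proof -
  have "is_nhd {x. G x < L + 1 / Suc n} a" for n :: nat
    by (rule nhd) simp
  then obtain W where W: "\<And>n. open (W n)" "\<And>n. a \<in> W n"
      "\<And>n. W n \<subseteq> {x. G x < L + 1 / Suc n}"
    unfolding is_nhd_def by metis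
  have basis: "\<exists>n. W n \<subseteq> U" if U: "open U" "a \<in> U" for U
  proof -
    obtain t where "L < t" and t: "{x. G x < t} \<subseteq> U"
      using fine[OF U] by blast
    then obtain n where "inverse (real (Suc n)) < t - L"
      using reals_Archimedean[of "t - L"] by auto
    then have "{x. G x < L + 1 / Suc n} \<subseteq> {x. G x < t}"
      by (auto simp: inverse_eq_divide)
    with W(3) t show ?thesis by blast
  qed
  show ?thesis
    unfolding countable_local_basis_def
  proof (intro exI[of _ "range W"] conjI ballI allI impI)
    fix U assume "open U \<and> a \<in> U"
    then obtain n where "W n \<subseteq> U" using basis by auto
    then show "\<exists>B\<in>range W. B \<subseteq> U" by blast
  qed (use W(1,2) in auto)
qed

lemma countable_local_basis_at_bot:
  fixes G :: "'a::linorder_topology \<Rightarrow> real"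
  assumes bot: "\<forall>x. a \<le> x" and above: "\<exists>y. a < y" and "mono G"
    and nonconst: "\<forall>b>a. \<forall>c. \<exists>x\<in>{a<..<b}. G x \<noteq> c"
  shows "countable_local_basis a"
proof -
  define L where "L = Inf (G ` {a<..})"
  have bdd: "bdd_below (G ` {a<..})"
    using \<open>mono G\<close> bot by (intro bdd_belowI[of _ "G a"]) (auto dest: monoD)
  show ?thesis
  proof (rule countable_local_basis_if_sublevel_sets[of L])
    fix t assume "L < t"
    then obtain x where "a < x" "G x < t"
      using above cInf_lessD[of "G ` {a<..}"] unfolding L_def by auto
    have "{..<x} \<subseteq> {y. G y < t}"
    proof
      fix y assume "y \<in> {..<x}"
      with \<open>mono G\<close> have "G y \<le> G x" by (auto intro: monoD)
      with \<open>G x < t\<close> show "y \<in> {y. G y < t}" by simp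
    qed
    with \<open>a < x\<close> show "is_nhd {y. G y < t} a"
      unfolding is_nhd_def by (intro exI[of _ "{..<x}"]) auto
  next
    fix U assume "open U" "a \<in> U"
    then obtain b where "a < b" "{a..<b} \<subseteq> U"
      using above open_right by blast
    then obtain x where x: "x \<in> {a<..<b}" "G x \<noteq> L"
      using nonconst by blast
    moreover have "L \<le> G x"
      unfolding L_def using bdd x(1) by (auto intro: cInf_lower)
    ultimately have "L < G x" by simp
    moreover have "{y. G y < G x} \<subseteq> {a..<x}"
    proof
      fix y assume "y \<in> {y. G y < G x}"
      with \<open>mono G\<close> have "\<not> x \<le> y" by (auto dest: monoD)
      with bot show "y \<in> {a..<x}" by auto
    qed
    moreover have "{a..<x} \<subseteq> U"
      using x by (intro order.trans[OF _ \<open>{a..<b} \<subseteq> U\<close>]) auto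
    ultimately show "\<exists>t>L. {y. G y < t} \<subseteq> U" by blast
  qed
qed

lemma countable_local_basis_at_top:
  fixes G :: "'a::linorder_topology \<Rightarrow> real"
  assumes top: "\<forall>x. x \<le> a" and below: "\<exists>y. y < a" and "mono G"
    and nonconst: "\<forall>b<a. \<forall>c. \<exists>x\<in>{b<..<a}. G x \<noteq> c"
  shows "countable_local_basis a"
proof -
  define S where "S = Sup (G ` {..<a})"
  have bdd: "bdd_above (G ` {..<a})"
    using \<open>mono G\<close> top by (intro bdd_aboveI[of _ "G a"]) (auto dest: monoD)
  show ?thesis
  proof (rule countable_local_basis_if_sublevel_sets[of "- S" "\<lambda>x. - G x"])
    fix t assume "- S < t"
    then obtain x where "x < a" "- t < G x"
      using below less_cSupD[of "G ` {..<a}"] unfolding S_def by force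
    have "{x<..} \<subseteq> {y. - G y < t}"
    proof
      fix y assume "y \<in> {x<..}"
      with \<open>mono G\<close> have "G x \<le> G y" by (auto intro: monoD)
      with \<open>- t < G x\<close> show "y \<in> {y. - G y < t}" by simp
    qed
    with \<open>x < a\<close> show "is_nhd {y. - G y < t} a"
      unfolding is_nhd_def by (intro exI[of _ "{x<..}"]) auto
  next
    fix U assume "open U" "a \<in> U"
    then obtain b where "b < a" "{b<..a} \<subseteq> U"
      using below open_left by blast
    then obtain x where x: "x \<in> {b<..<a}" "G x \<noteq> S"
      using nonconst by blast
    moreover have "G x \<le> S"
      unfolding S_def using bdd x(1) by (auto intro: cSup_upper)
    ultimately have "- S < - G x" by simp
    moreover have "{y. - G y < - G x} \<subseteq> {x<..a}"
    proof
      fix y assume "y \<in> {y. - G y < - G x}"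
      with \<open>mono G\<close> have "\<not> y \<le> x" by (auto dest: monoD)
      with top show "y \<in> {x<..a}" by auto
    qed
    moreover have "{x<..a} \<subseteq> U"
      using x by (intro order.trans[OF _ \<open>{b<..a} \<subseteq> U\<close>]) auto
    ultimately show "\<exists>t>- S. {y. - G y < t} \<subseteq> U" by blast
  qed
qed

lemma punctured_constant_or_countable_local_basis_at_bot:
  fixes G :: "'a::linorder_topology \<Rightarrow> real"
  assumes bot: "\<forall>x. a \<le> x" and "\<exists>y. a < y" and "mono G"
  shows "(\<exists>V. is_nhd V a \<and> V - {a} \<noteq> {} \<and> (\<exists>c. \<forall>x\<in>V - {a}. G x = c))
         \<or> countable_local_basis a"
proof (cases "\<exists>b>a. \<exists>c. \<forall>x\<in>{a<..<b}. G x = c")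
  case True
  then obtain b c where "a < b" "\<forall>x\<in>{a<..<b}. G x = c" by blast
  with bot show ?thesis
    by (intro punctured_constant_or_countable_local_basis[of "{..<b}" a G c])
      (auto simp: less_le)
next
  case False
  with assms show ?thesis
    using countable_local_basis_at_bot[of a G] by blast
qed

lemma punctured_constant_or_countable_local_basis_at_top:
  fixes G :: "'a::linorder_topology \<Rightarrow> real"
  assumes top: "\<forall>x. x \<le> a" and "\<exists>y. y < a" and "mono G"
  shows "(\<exists>V. is_nhd V a \<and> V - {a} \<noteq> {} \<and> (\<exists>c. \<forall>x\<in>V - {a}. G x = c))
         \<or> countable_local_basis a"
proof (cases "\<exists>b<a. \<exists>c. \<forall>x\<in>{b<..<a}. G x = c")
  case True
  then obtain b c where "b < a" "\<forall>x\<in>{b<..<a}. G x = c" by blast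
  with top show ?thesis
    by (intro punctured_constant_or_countable_local_basis[of "{b<..}" a G c])
      (auto simp: less_le)
next
  case False
  with assms show ?thesis
    using countable_local_basis_at_top[of a G] by blast
qed

theorem lemma5p1:
  fixes G :: "'a::linorder_topology \<Rightarrow> real" and a :: 'a
  assumes "compact (UNIV :: 'a set)"
    and "\<exists>x y :: 'a. x < y"
    and "mono G"
    and "(\<forall>x. a \<le> x) \<or> (\<forall>x. x \<le> a)"
  shows "(\<exists>V. is_nhd V a \<and> V - {a} \<noteq> {} \<and> (\<exists>c. \<forall>x\<in>V - {a}. G x = c))
         \<or> countable_local_basis a"
  using assms(4)
proof
  assume bot: "\<forall>x. a \<le> x"
  moreover have "\<exists>y. a < y" using assms(2) bot by (meson le_less_trans)
  ultimately show ?thesis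
    using \<open>mono G\<close> by (rule punctured_constant_or_countable_local_basis_at_bot)
next
  assume top: "\<forall>x. x \<le> a"
  moreover have "\<exists>y. y < a" using assms(2) top by (meson less_le_trans)
  ultimately show ?thesis
    using \<open>mono G\<close> by (rule punctured_constant_or_countable_local_basis_at_top)
qed

end
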